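(* Let $\sigma>0$, $n\ge2$, $f,g\in L^1(\mathbb{R}^2)\cap L^2(\mathbb{R}^2)$, and $\bar G=\{(1+\frac{2k}{n-1},1+\frac{2l}{n-1}):(k,l)\in\mathbb{Z}^2\}$. Then $$\Big|\Big(\frac{n-1}2\Big)^2\langle\Phi\ast f,\Phi\ast g\rangle_{L^2(\mathbb{R}^2)}-\langle\Phi\ast f,\Phi\ast g\rangle_{\ell^2(\bar G)}\Big|\le\frac{\|f\|_{L^1}\|g\|_{L^1}}{(2\pi\sigma^2)^2}\Big(1+\frac{(n-1)\sigma}{\sqrt2}\Big),$$ where $\Phi(s,t)=\varphi_{\sigma^2}(s)\varphi_{\sigma^2}(t)$.
   Context: $\varphi_{\sigma^2}(t)=(2\pi\sigma^2)^{-1/2}e^{-t^2/(2\sigma^2)}$; $\ast$ is convolution on $\mathbb{R}^2$; $\langle a,b\rangle_{\ell^2(\bar G)}=\sum_{\mathbf{x}\in\bar G}a(\mathbf{x})b(\mathbf{x})$. *)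

theory Defs
  imports "HOL-Analysis.Analysis"
begin

definition gauss :: "real \<Rightarrow> real \<Rightarrow> real" where
  "gauss v t = (2 * pi * v) powr (-1/2) * exp (- (t^2) / (2 * v))"

definition Phi2 :: "real \<Rightarrow> real \<times> real \<Rightarrow> real" where
  "Phi2 \<sigma> p = gauss (\<sigma>^2) (fst p) * gauss (\<sigma>^2) (snd p)"

definition conv2 :: "(real \<times> real \<Rightarrow> real) \<Rightarrow> (real \<times> real \<Rightarrow> real) \<Rightarrow> real \<times> real \<Rightarrow> real" where
  "conv2 h f x = (\<integral>y. h (x - y) * f y \<partial>lborel)"

definition L2 :: "(real \<times> real \<Rightarrow> real) \<Rightarrow> bool" where
  "L2 f \<longleftrightarrow> f \<in> borel_measurable lborel \<and> integrable lborel (\<lambda>x. (f x)^2)"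

definition L1norm :: "(real \<times> real \<Rightarrow> real) \<Rightarrow> real" where
  "L1norm f = (\<integral>x. \<bar>f x\<bar> \<partial>lborel)"

definition L2inner :: "(real \<times> real \<Rightarrow> real) \<Rightarrow> (real \<times> real \<Rightarrow> real) \<Rightarrow> real" where
  "L2inner a b = (\<integral>x. a x * b x \<partial>lborel)"

definition gridpt :: "nat \<Rightarrow> int \<times> int \<Rightarrow> real \<times> real" where
  "gridpt n kl = (1 + 2 * real_of_int (fst kl) / (real n - 1), 1 + 2 * real_of_int (snd kl) / (real n - 1))"

end

theory Submission
  imports Defs "HOL-Probability.Distributions"
begin

(* By Fubini, both inner products are integrals of f(y) g(z) against a kernel: the continuous
   one has K(y,z) = \<integral> \<Phi>(x - y) \<Phi>(x - z) dx, the discrete one the same expression with the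
   integral replaced by the sum over the grid.  Both kernels factor into one-dimensional ones, and
   \<phi>(s - a) \<phi>(s - b) = c(a,b) exp(-(s - (a+b)/2)^2 / \<sigma>^2) with 0 < c(a,b) \<le> 1/(2 pi \<sigma>^2).
   After rescaling by the grid spacing everything reduces to comparing the lattice sum
   S = \<Sum>k exp(-(k - a)^2 / r^2), r = \<sigma> (n-1)/2, with its integral r sqrt pi.  A midpoint rule
   with an Euler-Maclaurin type correction gives |S - r sqrt pi| \<le> sqrt 2 e^(-1/2) / (4 r), which is
   good for large r; for small r the terms away from the nearest lattice point decay geometrically.
   Elementary numerics turn this into |S1 S2 - pi r^2| \<le> 1 + sqrt 2 r, and integrating the kernel
   discrepancy against |f(y)| |g(z)| gives the estimate. *)

section \<open>A corrected midpoint rule\<close>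

lemma integral_combine_continuous:
  fixes f :: "real \<Rightarrow> real"
  assumes "continuous_on UNIV f" "a \<le> c" "c \<le> b"
  shows "integral {a..c} f + integral {c..b} f = integral {a..b} f"
  using assms by (intro Henstock_Kurzweil_Integration.integral_combine integrable_continuous_real)
    (auto intro: continuous_on_subset)

(* G' = K f'' - f, so this is two integrations by parts against the Peano kernel K; the shift
   by 1/16 makes |K| \<le> 1/16 on a half cell around its endpoint e. *)
lemma half_cell_peano_estimate:
  fixes f f' f'' :: "real \<Rightarrow> real"
  assumes f: "\<And>x. (f has_real_derivative f' x) (at x)"
    and f': "\<And>x. (f' has_real_derivative f'' x) (at x)"
    and f'': "continuous_on UNIV f''"
    and pq: "p \<le> q" and e: "\<And>x. x \<in> {p..q} \<Longrightarrow> \<bar>x - e\<bar> \<le> 1/2"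
  defines "K \<equiv> \<lambda>x. (x - e)^2 / 2 - 1/16"
    and "G \<equiv> \<lambda>x. ((x - e)^2 / 2 - 1/16) * f' x - (x - e) * f x"
  shows "\<bar>integral {p..q} f + G q - G p\<bar> \<le> integral {p..q} (\<lambda>x. \<bar>f'' x\<bar>) / 16"
proof -
  have "(G has_real_derivative K x * f'' x - f x) (at x)" for x
  proof -
    have "(G has_real_derivative (x - e) * f' x + K x * f'' x - (f x + (x - e) * f' x)) (at x)"
      unfolding G_def K_def by (auto intro!: derivative_eq_intros f f')
    then show ?thesis by (simp add: algebra_simps)
  qed
  then have Kf''_f: "((\<lambda>x. K x * f'' x - f x) has_integral G q - G p) {p..q}"
    by (intro fundamental_theorem_of_calculus[OF pq])
       (auto simp: has_real_derivative_iff_has_vector_derivative[symmetric]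
         intro: has_field_derivative_at_within)
  have f_int: "(f has_integral integral {p..q} f) {p..q}"
    using f by (intro integrable_integral integrable_continuous_real DERIV_continuous_on)
      (rule has_field_derivative_at_within)
  have Kf'': "((\<lambda>x. K x * f'' x) has_integral integral {p..q} f + G q - G p) {p..q}"
    using has_integral_add[OF Kf''_f f_int] by (simp add: algebra_simps)
  have "\<bar>K x\<bar> \<le> 1/16" if "x \<in> {p..q}" for x
  proof -
    have "\<bar>x - e\<bar>^2 \<le> (1/2)^2"
      using e[OF that] by (intro power_mono) auto
    then have "(x - e)^2 \<le> 1/4"
      by (simp add: power_divide)
    then show ?thesis
      unfolding K_def abs_le_iff using zero_le_power2[of "x - e"] by (intro conjI) linarith+
  qed
  then have bound: "norm (K x * f'' x) \<le> \<bar>f'' x\<bar> / 16" if "x \<in> {p..q}" for x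
    using that mult_right_mono[of "\<bar>K x\<bar>" "1/16" "\<bar>f'' x\<bar>"] by (simp add: abs_mult)
  have abs_f'': "((\<lambda>x. \<bar>f'' x\<bar> / 16) has_integral integral {p..q} (\<lambda>x. \<bar>f'' x\<bar>) / 16) {p..q}"
    using f'' by (intro has_integral_divide integrable_integral integrable_continuous_real continuous_intros)
         (auto intro: continuous_on_subset)
  have "norm (integral {p..q} (\<lambda>x. K x * f'' x)) \<le> integral {p..q} (\<lambda>x. \<bar>f'' x\<bar> / 16)"
    using Kf'' abs_f'' bound by (intro integral_norm_bound_integral) auto
  then show ?thesis
    by (simp add: integral_unique[OF Kf''] integral_unique[OF abs_f''])
qed

lemma corrected_midpoint_rule:
  fixes f f' f'' :: "real \<Rightarrow> real"
  assumes f: "\<And>x. (f has_real_derivative f' x) (at x)"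
    and f': "\<And>x. (f' has_real_derivative f'' x) (at x)"
    and f'': "continuous_on UNIV f''"
  shows "\<bar>integral {c..c+1} f - f (c + 1/2) - (f' (c+1) - f' c) / 16\<bar>
           \<le> integral {c..c+1} (\<lambda>x. \<bar>f'' x\<bar>) / 16"
proof -
  have left: "\<bar>integral {c..c+1/2} f + f' (c+1/2) / 16 - f (c+1/2) / 2 + f' c / 16\<bar>
      \<le> integral {c..c+1/2} (\<lambda>x. \<bar>f'' x\<bar>) / 16"
    using half_cell_peano_estimate[OF f f' f'', of c "c+1/2" c] by (simp add: power_divide add_diff_eq)
  have right: "\<bar>integral {c+1/2..c+1} f - f' (c+1) / 16 - f (c+1/2) / 2 - f' (c+1/2) / 16\<bar>
      \<le> integral {c+1/2..c+1} (\<lambda>x. \<bar>f'' x\<bar>) / 16"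
    using half_cell_peano_estimate[OF f f' f'', of "c+1/2" "c+1" "c+1"]
    by (simp add: power_divide diff_add_eq_diff_diff_swap)
  have "continuous_on UNIV f"
    using f by (intro DERIV_continuous_on) (rule has_field_derivative_at_within)
  moreover have "continuous_on UNIV (\<lambda>x. \<bar>f'' x\<bar>)"
    using f'' by (intro continuous_intros)
  ultimately have "integral {c..c+1/2} f + integral {c+1/2..c+1} f = integral {c..c+1} f"
    and "integral {c..c+1/2} (\<lambda>x. \<bar>f'' x\<bar>) + integral {c+1/2..c+1} (\<lambda>x. \<bar>f'' x\<bar>)
      = integral {c..c+1} (\<lambda>x. \<bar>f'' x\<bar>)"
    by (simp_all add: integral_combine_continuous)
  then show ?thesis
    using left right unfolding abs_le_iff by argo
qed

lemma corrected_midpoint_sum: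
  fixes f f' f'' :: "real \<Rightarrow> real"
  assumes f: "\<And>x. (f has_real_derivative f' x) (at x)"
    and f': "\<And>x. (f' has_real_derivative f'' x) (at x)"
    and f'': "continuous_on UNIV f''"
  shows "\<bar>integral {L..L + real M} f - (\<Sum>i<M. f (L + real i + 1/2)) - (f' (L + real M) - f' L) / 16\<bar>
           \<le> integral {L..L + real M} (\<lambda>x. \<bar>f'' x\<bar>) / 16"
proof (induction M)
  case 0
  then show ?case by simp
next
  case (Suc M)
  let ?R = "L + real M"
  have "continuous_on UNIV f"
    using f by (intro DERIV_continuous_on) (rule has_field_derivative_at_within)
  moreover have "continuous_on UNIV (\<lambda>x. \<bar>f'' x\<bar>)"
    using f'' by (intro continuous_intros)
  ultimately have "integral {L..?R} f + integral {?R..?R + 1} f = integral {L..?R + 1} f"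
    and "integral {L..?R} (\<lambda>x. \<bar>f'' x\<bar>) + integral {?R..?R + 1} (\<lambda>x. \<bar>f'' x\<bar>)
      = integral {L..?R + 1} (\<lambda>x. \<bar>f'' x\<bar>)"
    by (simp_all add: integral_combine_continuous)
  then show ?case
    using Suc.IH corrected_midpoint_rule[OF f f' f'', of ?R]
    unfolding abs_le_iff by (simp add: add.assoc) argo
qed

section \<open>Lattice sums of a Gaussian\<close>

definition gauss_bump :: "real \<Rightarrow> real \<Rightarrow> real" where
  "gauss_bump r x = exp (- (x^2) / r^2)"

definition gauss_bump_d1 :: "real \<Rightarrow> real \<Rightarrow> real" where
  "gauss_bump_d1 r x = - 2 * x / r^2 * gauss_bump r x"

definition gauss_bump_d2 :: "real \<Rightarrow> real \<Rightarrow> real" where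
  "gauss_bump_d2 r x = 2 * (2 * x^2 - r^2) / r^4 * gauss_bump r x"

lemma gauss_bump_pos: "gauss_bump r x > 0"
  by (simp add: gauss_bump_def)

lemma gauss_bump_le_1: "gauss_bump r x \<le> 1"
  by (simp add: gauss_bump_def)

lemma continuous_on_gauss_bump: "continuous_on S (gauss_bump r)"
  unfolding gauss_bump_def divide_inverse by (intro continuous_intros)

lemma continuous_on_gauss_bump_d2: "continuous_on S (gauss_bump_d2 r)"
  unfolding gauss_bump_d2_def gauss_bump_def divide_inverse by (intro continuous_intros)

lemma gauss_bump_has_derivative:
  "r \<noteq> 0 \<Longrightarrow> (gauss_bump r has_real_derivative gauss_bump_d1 r x) (at x)"
  unfolding gauss_bump_def gauss_bump_d1_def
  by (auto intro!: derivative_eq_intros simp: field_simps power2_eq_square)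

lemma gauss_bump_d1_has_derivative:
  assumes "r \<noteq> 0" shows "(gauss_bump_d1 r has_real_derivative gauss_bump_d2 r x) (at x)"
proof -
  have "((\<lambda>x. - 2 * x / r^2 * gauss_bump r x) has_real_derivative
          - 2 / r^2 * gauss_bump r x + - 2 * x / r^2 * gauss_bump_d1 r x) (at x)"
    using assms by (auto intro!: derivative_eq_intros gauss_bump_has_derivative simp: field_simps)
  moreover have "- 2 / r^2 * gauss_bump r x + - 2 * x / r^2 * gauss_bump_d1 r x = gauss_bump_d2 r x"
    using assms by (simp add: gauss_bump_d1_def gauss_bump_d2_def field_simps eval_nat_numeral)
  ultimately show ?thesis
    unfolding gauss_bump_d1_def[abs_def] by simp
qed

lemma gauss_bump_d1_nonneg_iff:
  assumes "r \<noteq> 0" shows "gauss_bump_d1 r x \<ge> 0 \<longleftrightarrow> x \<le> 0"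
proof -
  define c where "c = - 2 * gauss_bump r x / r^2"
  have "c < 0"
    using assms gauss_bump_pos[of r x] by (simp add: c_def divide_neg_pos)
  moreover have "gauss_bump_d1 r x = c * x"
    by (simp add: gauss_bump_d1_def c_def)
  ultimately show ?thesis
    by (auto simp: zero_le_mult_iff)
qed

lemma gauss_bump_d1_inflection:
  assumes "r > 0"
  shows "gauss_bump_d1 r (- (r / sqrt 2)) = sqrt 2 * exp (-1/2) / r"
    and "gauss_bump_d1 r (r / sqrt 2) = - sqrt 2 * exp (-1/2) / r"
proof -
  have "gauss_bump r (r / sqrt 2) = exp (-1/2)" "gauss_bump r (- (r / sqrt 2)) = exp (-1/2)"
    using assms by (simp_all add: gauss_bump_def power_divide)
  moreover have "2 * (r / sqrt 2) / r^2 = sqrt 2 / r"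
    using assms by (simp add: field_simps power2_eq_square)
  ultimately show "gauss_bump_d1 r (- (r / sqrt 2)) = sqrt 2 * exp (-1/2) / r"
    and "gauss_bump_d1 r (r / sqrt 2) = - sqrt 2 * exp (-1/2) / r"
    by (simp_all add: gauss_bump_d1_def)
qed

lemma gauss_bump_d2_nonneg_iff:
  assumes "r > 0" shows "gauss_bump_d2 r x \<ge> 0 \<longleftrightarrow> r / sqrt 2 \<le> \<bar>x\<bar>"
proof -
  have "r / sqrt 2 \<le> \<bar>x\<bar> \<longleftrightarrow> \<bar>r / sqrt 2\<bar> \<le> \<bar>x\<bar>"
    using assms by simp
  also have "\<dots> \<longleftrightarrow> r^2 \<le> 2 * x^2"
    unfolding abs_le_square_iff by (simp add: power_divide field_simps)
  finally show ?thesis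
    using assms gauss_bump_pos[of r x]
    by (simp add: gauss_bump_d2_def zero_le_mult_iff zero_le_divide_iff)
qed

lemma integral_abs_gauss_bump_d2:
  assumes r: "r > 0" and L: "L \<le> - r / sqrt 2" and R: "r / sqrt 2 \<le> R"
  shows "((\<lambda>x. \<bar>gauss_bump_d2 r x\<bar>) has_integral
           4 * (sqrt 2 * exp (-1/2) / r) + gauss_bump_d1 r R - gauss_bump_d1 r L) {L..R}"
proof -
  let ?s = "r / sqrt 2" and ?d1 = "gauss_bump_d1 r" and ?d2 = "gauss_bump_d2 r"
  have s: "0 < ?s" using r by simp
  have L': "L \<le> - ?s" using L by simp
  have ftc: "((\<lambda>x. \<bar>?d2 x\<bar>) has_integral g b - g a) {a..b}"
    if "a \<le> b" and "\<And>x. x \<in> {a..b} \<Longrightarrow> (g has_real_derivative \<bar>?d2 x\<bar>) (at x)" for a b g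
    using that by (intro fundamental_theorem_of_calculus)
      (auto simp: has_real_derivative_iff_has_vector_derivative[symmetric] intro: has_field_derivative_at_within)
  have d1: "(?d1 has_real_derivative ?d2 x) (at x)" for x
    using r by (intro gauss_bump_d1_has_derivative) simp
  have "((\<lambda>x. \<bar>?d2 x\<bar>) has_integral ?d1 (- ?s) - ?d1 L) {L..- ?s}"
  proof (rule ftc[OF L'])
    fix x assume "x \<in> {L..- ?s}"
    then have "?d2 x \<ge> 0" using s by (simp add: gauss_bump_d2_nonneg_iff[OF r])
    then show "(?d1 has_real_derivative \<bar>?d2 x\<bar>) (at x)" using d1 by simp
  qed
  moreover have "((\<lambda>x. \<bar>?d2 x\<bar>) has_integral (- ?d1 ?s) - (- ?d1 (- ?s))) {- ?s..?s}"
  proof (rule ftc)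
    fix x assume x: "x \<in> {- ?s..?s}"
    show "((\<lambda>x. - ?d1 x) has_real_derivative \<bar>?d2 x\<bar>) (at x)"
    proof (cases "\<bar>x\<bar> = ?s")
      case True
      then have "x^2 = ?s^2"
        by (metis power2_abs)
      then have "?d2 x = 0"
        by (simp add: gauss_bump_d2_def power_divide)
      then show ?thesis using DERIV_minus[OF d1, of x] by simp
    next
      case False
      then have "\<bar>x\<bar> < ?s" using x by auto
      then have "?d2 x \<le> 0" using gauss_bump_d2_nonneg_iff[OF r, of x] by linarith
      then show ?thesis using DERIV_minus[OF d1, of x] by simp
    qed
  qed (use s in simp)
  moreover have "((\<lambda>x. \<bar>?d2 x\<bar>) has_integral ?d1 R - ?d1 ?s) {?s..R}"
  proof (rule ftc[OF R])
    fix x assume "x \<in> {?s..R}"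
    then have "?d2 x \<ge> 0" using s by (simp add: gauss_bump_d2_nonneg_iff[OF r])
    then show "(?d1 has_real_derivative \<bar>?d2 x\<bar>) (at x)" using d1 by simp
  qed
  ultimately have "((\<lambda>x. \<bar>?d2 x\<bar>) has_integral
      (?d1 (- ?s) - ?d1 L) + ((- ?d1 ?s) - (- ?d1 (- ?s))) + (?d1 R - ?d1 ?s)) {L..R}"
    using L' R s by (intro has_integral_combine) auto
  then show ?thesis
    by (simp add: gauss_bump_d1_inflection[OF r] algebra_simps)
qed

lemma gauss_bump_shift_eq_normal_density:
  assumes "r > 0"
  shows "gauss_bump r (x - m) = r * sqrt pi * normal_density m (r / sqrt 2) x"
proof -
  have "2 * pi * (r / sqrt 2)^2 = pi * r^2" "2 * (r / sqrt 2)^2 = r^2"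
    by (simp_all add: power_divide)
  moreover have "sqrt (pi * r^2) = sqrt pi * r"
    using assms by (simp add: real_sqrt_mult)
  ultimately show ?thesis
    using assms by (simp add: normal_density_def gauss_bump_def field_simps)
qed

lemma
  assumes "r > 0"
  shows integrable_gauss_bump_shift: "integrable lborel (\<lambda>x. gauss_bump r (x - m))"
    and integral_gauss_bump_shift: "(\<integral>x. gauss_bump r (x - m) \<partial>lborel) = r * sqrt pi"
  using assms by (simp_all add: gauss_bump_shift_eq_normal_density)

lemma has_integral_gauss_bump:
  assumes "r > 0" shows "(gauss_bump r has_integral r * sqrt pi) UNIV"
proof -
  have "integrable lborel (gauss_bump r)" "(\<integral>x. gauss_bump r x \<partial>lborel) = r * sqrt pi"
    using integrable_gauss_bump_shift[OF assms, of 0] integral_gauss_bump_shift[OF assms, of 0] by simp_all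
  then show ?thesis
    using has_integral_integral_lborel by metis
qed

lemma integral_gauss_bump_le:
  assumes "r > 0" shows "integral {a..b} (gauss_bump r) \<le> r * sqrt pi"
proof -
  have "integral {a..b} (gauss_bump r) \<le> integral UNIV (gauss_bump r)"
    using has_integral_gauss_bump[OF assms] gauss_bump_pos
    by (intro integral_subset_le integrable_continuous_real continuous_on_gauss_bump)
      (auto simp: has_integral_integrable less_imp_le)
  then show ?thesis
    using integral_unique[OF has_integral_gauss_bump[OF assms]] by simp
qed

lemma sum_int_symmetric_interval:
  "(\<Sum>k = - int N..int N. g k) = (\<Sum>i<2 * N + 1. g (int i - int N))"
proof -
  have "(\<lambda>i. int i - int N) ` {..<2 * N + 1} = {- int N..int N}"
    by (auto intro!: image_eqI[where x = "nat (k + int N)" for k])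
  moreover have "inj_on (\<lambda>i. int i - int N) {..<2 * N + 1}"
    by (auto simp: inj_on_def)
  ultimately show ?thesis
    using sum.reindex[of "\<lambda>i. int i - int N" "{..<2 * N + 1}" g] by simp
qed

lemma gauss_bump_box_sum:
  assumes r: "r > 0" and N: "r / sqrt 2 + \<bar>a\<bar> \<le> real N"
  shows "\<bar>(\<Sum>k = - int N..int N. gauss_bump r (of_int k - a))
           - integral {- real N - a - 1/2..real N - a + 1/2} (gauss_bump r)\<bar>
         \<le> sqrt 2 * exp (-1/2) / (4 * r)"
proof -
  define L where "L = - real N - a - 1/2"
  define R where "R = real N - a + 1/2"
  have LR: "L \<le> - r / sqrt 2" "r / sqrt 2 \<le> R" "L + real (2 * N + 1) = R"
    using N by (auto simp: L_def R_def)
  moreover have "0 < r / sqrt 2"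
    using r by simp
  ultimately have "L \<le> 0" "0 < R"
    by linarith+
  then have d1_signs: "gauss_bump_d1 r L \<ge> 0" "gauss_bump_d1 r R \<le> 0"
    using r gauss_bump_d1_nonneg_iff[of r L] gauss_bump_d1_nonneg_iff[of r R] by auto
  have "(\<Sum>k = - int N..int N. gauss_bump r (of_int k - a))
      = (\<Sum>i<2 * N + 1. gauss_bump r (L + real i + 1/2))"
    unfolding sum_int_symmetric_interval by (intro sum.cong) (auto simp: L_def algebra_simps)
  moreover have "\<bar>integral {L..R} (gauss_bump r) - (\<Sum>i<2 * N + 1. gauss_bump r (L + real i + 1/2))
      - (gauss_bump_d1 r R - gauss_bump_d1 r L) / 16\<bar> \<le> integral {L..R} (\<lambda>x. \<bar>gauss_bump_d2 r x\<bar>) / 16"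
    using corrected_midpoint_sum[OF gauss_bump_has_derivative gauss_bump_d1_has_derivative
        continuous_on_gauss_bump_d2, of r L "2 * N + 1"] r
    unfolding LR(3) by simp
  moreover have "integral {L..R} (\<lambda>x. \<bar>gauss_bump_d2 r x\<bar>)
      = 4 * (sqrt 2 * exp (-1/2) / r) + gauss_bump_d1 r R - gauss_bump_d1 r L"
    using integral_unique[OF integral_abs_gauss_bump_d2[OF r LR(1,2)]] .
  moreover have "sqrt 2 * exp (-1/2) / (4 * r) = (sqrt 2 * exp (-1/2) / r) / 4"
    by simp
  \<comment> \<open>the end corrections have signs that only help, in both directions\<close>
  ultimately show ?thesis
    using d1_signs unfolding L_def R_def abs_le_iff by argo
qed

lemma finite_int_set_subset_interval:
  fixes F :: "int set"
  assumes "finite F" shows "\<exists>N0. \<forall>N \<ge> N0. F \<subseteq> {- int N..int N}"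
proof -
  define m where "m = Max (abs ` insert 0 F)"
  have "\<forall>k\<in>F. \<bar>k\<bar> \<le> m"
    using assms by (auto simp: m_def intro!: Max_ge)
  then show ?thesis
    by (intro exI[of _ "nat m"]) force
qed

lemma integral_gauss_bump_large_box:
  assumes r: "r > 0" and "\<epsilon> > 0"
  obtains N0 :: nat
  where "\<And>N. N \<ge> N0 \<Longrightarrow>
    r * sqrt pi - \<epsilon> \<le> integral {- real N - a - 1/2..real N - a + 1/2} (gauss_bump r)"
proof -
  obtain B where "B > 0" and B: "\<And>l u. ball 0 B \<subseteq> cbox l u \<Longrightarrow>
      norm (integral (cbox l u) (\<lambda>x. if x \<in> UNIV then gauss_bump r x else 0) - r * sqrt pi) < \<epsilon>"
    using has_integral_gauss_bump[OF r] \<open>\<epsilon> > 0\<close> unfolding has_integral_alt' by blast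
  obtain N0 :: nat where N0: "\<bar>a\<bar> + B \<le> real N0"
    using real_arch_simple by blast
  have "ball 0 B \<subseteq> cbox (- real N - a - 1/2) (real N - a + 1/2)" if "N \<ge> N0" for N
  proof
    fix x :: real assume "x \<in> ball 0 B"
    then show "x \<in> cbox (- real N - a - 1/2) (real N - a + 1/2)"
      using N0 that by (auto simp: abs_less_iff abs_le_iff)
  qed
  then show ?thesis
    using B by (intro that[of N0]) fastforce
qed

definition gauss_lattice_sum :: "real \<Rightarrow> real \<Rightarrow> real" where
  "gauss_lattice_sum r a = (\<Sum>\<^sub>\<infinity>k::int. gauss_bump r (of_int k - a))"

lemma gauss_lattice_sum_nonneg: "gauss_lattice_sum r a \<ge> 0"
  unfolding gauss_lattice_sum_def by (intro infsum_nonneg) (simp add: less_imp_le[OF gauss_bump_pos])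

lemma
  assumes r: "r > 0"
  shows summable_gauss_lattice: "(\<lambda>k::int. gauss_bump r (of_int k - a)) summable_on UNIV"
    and gauss_lattice_sum_near_integral:
      "\<bar>gauss_lattice_sum r a - r * sqrt pi\<bar> \<le> sqrt 2 * exp (-1/2) / (4 * r)"
proof -
  let ?g = "\<lambda>k::int. gauss_bump r (of_int k - a)" and ?M = "sqrt 2 * exp (-1/2) / (4 * r)"
  let ?I = "\<lambda>N. integral {- real N - a - 1/2..real N - a + 1/2} (gauss_bump r)"
  obtain N1 :: nat where N1: "r / sqrt 2 + \<bar>a\<bar> \<le> real N1"
    using real_arch_simple by blast
  have box: "\<bar>sum ?g {- int N..int N} - ?I N\<bar> \<le> ?M" if "N \<ge> N1" for N
    using N1 that by (intro gauss_bump_box_sum[OF r]) auto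
  have finite_sums: "sum ?g F \<le> r * sqrt pi + ?M" if "finite F" for F
  proof -
    obtain N0 where N0: "\<forall>N \<ge> N0. F \<subseteq> {- int N..int N}"
      using finite_int_set_subset_interval[OF \<open>finite F\<close>] by blast
    define N where "N = max N0 N1"
    have "sum ?g F \<le> sum ?g {- int N..int N}"
      using N0 by (intro sum_mono2) (auto simp: N_def less_imp_le[OF gauss_bump_pos])
    also have "\<dots> \<le> ?I N + ?M"
      using box[of N] by (simp add: N_def)
    also have "\<dots> \<le> r * sqrt pi + ?M"
      using integral_gauss_bump_le[OF r] by simp
    finally show ?thesis .
  qed
  show summable: "?g summable_on UNIV"
    using finite_sums by (intro nonneg_bdd_above_summable_on bdd_aboveI2)
      (auto simp: less_imp_le[OF gauss_bump_pos])
  have "gauss_lattice_sum r a \<le> r * sqrt pi + ?M"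
    unfolding gauss_lattice_sum_def using summable finite_sums by (rule infsum_le_finite_sums)
  moreover have "r * sqrt pi - ?M \<le> gauss_lattice_sum r a + \<epsilon>" if "\<epsilon> > 0" for \<epsilon>
  proof -
    obtain N0 where N0: "\<And>N. N \<ge> N0 \<Longrightarrow> r * sqrt pi - \<epsilon> \<le> ?I N"
      using integral_gauss_bump_large_box[OF r \<open>\<epsilon> > 0\<close>] by blast
    define N where "N = max N0 N1"
    have "sum ?g {- int N..int N} \<le> gauss_lattice_sum r a"
      unfolding gauss_lattice_sum_def
      by (intro finite_sum_le_infsum summable) (auto simp: less_imp_le[OF gauss_bump_pos])
    then show ?thesis
      using N0[of N] box[of N] by (simp add: N_def)
  qed
  then have "r * sqrt pi - ?M \<le> gauss_lattice_sum r a"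
    by (rule field_le_epsilon)
  ultimately show "\<bar>gauss_lattice_sum r a - r * sqrt pi\<bar> \<le> ?M"
    by linarith
qed

lemma gauss_bump_off_centre_le:
  fixes k k0 :: int
  assumes r: "r > 0" and k0: "\<bar>of_int k0 - a\<bar> \<le> 1/2" and k: "k \<noteq> k0"
  shows "gauss_bump r (of_int k - a) \<le> exp (- 1 / (4 * r^2)) * exp (- 1 / r^2) ^ (nat \<bar>k - k0\<bar> - 1)"
proof -
  define n where "n = nat \<bar>k - k0\<bar>"
  have n: "n \<ge> 1" "real n = \<bar>of_int k - of_int k0\<bar>"
    using k by (auto simp: n_def)
  have "real n - 1/2 \<le> \<bar>of_int k - a\<bar>"
    using k0 n(2) by (smt (verit))
  moreover have "0 \<le> real n - 1/2"
    using n(1) by simp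
  ultimately have "(real n - 1/2)^2 \<le> (of_int k - a)^2"
    using power_mono[of "real n - 1/2" "\<bar>of_int k - a\<bar>" 2] by simp
  moreover have "real n - 3/4 \<le> (real n - 1/2)^2"
    using zero_le_power2[of "real n - 1"] by (simp add: power2_eq_square algebra_simps)
  ultimately have "(real n - 3/4) / r^2 \<le> (of_int k - a)^2 / r^2"
    by (intro divide_right_mono) auto
  then have "- ((of_int k - a)^2) / r^2 \<le> - (real n - 3/4) / r^2"
    by (simp only: minus_divide_left[symmetric] neg_le_iff_le)
  also have "- (real n - 3/4) / r^2 = - 1 / (4 * r^2) + real (n - 1) * (- 1 / r^2)"
    using n r by (simp add: of_nat_diff field_simps)
  finally show ?thesis
    unfolding gauss_bump_def n_def[symmetric] by (simp add: exp_add[symmetric] exp_of_nat_mult[symmetric])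
qed

lemma sum_power_inj_le:
  fixes q :: real
  assumes "0 \<le> q" "q < 1" "finite G" "inj_on h G"
  shows "(\<Sum>x\<in>G. q ^ h x) \<le> 1 / (1 - q)"
proof -
  have "(\<Sum>x\<in>G. q ^ h x) = (\<Sum>i\<in>h ` G. q ^ i)"
    using assms by (simp add: sum.reindex)
  also have "\<dots> \<le> (\<Sum>i. q ^ i)"
    using assms by (intro sum_le_suminf summable_geometric) auto
  also have "\<dots> = 1 / (1 - q)"
    using assms by (simp add: suminf_geometric)
  finally show ?thesis .
qed

lemma gauss_lattice_sum_le:
  assumes r: "r > 0"
  shows "gauss_lattice_sum r a \<le> 1 + 2 * exp (- 1 / (4 * r^2)) / (1 - exp (- 1 / r^2))"
proof -
  let ?g = "\<lambda>k::int. gauss_bump r (of_int k - a)"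
  define p where "p = exp (- 1 / (4 * r^2))"
  define q where "q = exp (- 1 / r^2)"
  have "0 \<le> p" "0 \<le> q" "q < 1"
    using r by (auto simp: p_def q_def)
  define k0 where "k0 = \<lfloor>a + 1/2\<rfloor>"
  have k0: "\<bar>of_int k0 - a\<bar> \<le> 1/2"
    unfolding k0_def abs_le_iff using of_int_floor_le[of "a + 1/2"] real_of_int_floor_add_one_gt[of "a + 1/2"]
    by linarith
  have one_side: "sum ?g H \<le> p / (1 - q)"
    if H: "finite H" "k0 \<notin> H" "inj_on (\<lambda>k. nat \<bar>k - k0\<bar> - 1) H" for H
  proof -
    have "?g k \<le> p * q ^ (nat \<bar>k - k0\<bar> - 1)" if "k \<in> H" for k
      using gauss_bump_off_centre_le[OF r k0, of k] that H(2) by (auto simp: p_def q_def)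
    then have "sum ?g H \<le> (\<Sum>k\<in>H. p * q ^ (nat \<bar>k - k0\<bar> - 1))"
      by (rule sum_mono)
    also have "\<dots> \<le> p * (1 / (1 - q))"
      unfolding sum_distrib_left[symmetric] using \<open>0 \<le> p\<close> \<open>0 \<le> q\<close> \<open>q < 1\<close> H
      by (intro mult_left_mono sum_power_inj_le) auto
    finally show ?thesis by simp
  qed
  have "sum ?g F \<le> 1 + 2 * p / (1 - q)" if F: "finite F" for F
  proof -
    define F1 where "F1 = {k \<in> F. k > k0}"
    define F2 where "F2 = {k \<in> F. k < k0}"
    have "F - {k0} = F1 \<union> F2"
      by (auto simp: F1_def F2_def)
    then have "sum ?g F = sum ?g (F \<inter> {k0}) + sum ?g (F1 \<union> F2)"
      using sum.Int_Diff[OF F, of ?g "{k0}"] by simp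
    also have "sum ?g (F1 \<union> F2) = sum ?g F1 + sum ?g F2"
      using F by (intro sum.union_disjoint) (auto simp: F1_def F2_def)
    also have "sum ?g (F \<inter> {k0}) \<le> 1"
      using gauss_bump_le_1 by (cases "k0 \<in> F") auto
    also have "sum ?g F1 \<le> p / (1 - q)"
      using F by (intro one_side) (auto simp: F1_def inj_on_def)
    also have "sum ?g F2 \<le> p / (1 - q)"
      using F by (intro one_side) (auto simp: F2_def inj_on_def)
    finally show ?thesis by simp
  qed
  then show ?thesis
    unfolding gauss_lattice_sum_def p_def q_def
    by (intro infsum_le_finite_sums summable_gauss_lattice[OF r]) auto
qed

section \<open>Products of two lattice sums\<close>

lemma exp_one_ge: "27182/10000 \<le> exp (1::real)"
proof -
  have "5837465777 / 2147483648 - inverse (2 ^ 32) \<le> exp (1::real)"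
    using abs_le_D2[OF e_approx_32] by linarith
  moreover have "27182/10000 \<le> 5837465777 / 2147483648 - inverse (2 ^ 32 :: real)"
    by simp
  ultimately show ?thesis by linarith
qed

lemma exp_minus_one_le: "exp (-1::real) \<le> 3679/10000"
proof -
  have "exp (-1::real) = 1 / exp 1"
    by (simp add: exp_minus inverse_eq_divide)
  also have "\<dots> \<le> 1 / (27182/10000)"
    using exp_one_ge by (intro divide_left_mono) auto
  finally show ?thesis by simp
qed

lemma exp_minus_half_le: "exp (-1/2::real) \<le> 6066/10000"
proof (rule power2_le_imp_le)
  have "exp (-1/2::real)^2 = exp (-1)"
    by (simp add: power2_eq_square exp_add[symmetric])
  then show "exp (-1/2::real)^2 \<le> (6066/10000)^2"
    using exp_minus_one_le by (simp add: power2_eq_square)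
qed simp

lemma sqrt_2pi_exp_minus_half_le: "sqrt 2 * sqrt pi * exp (-1/2) \<le> 153/100"
proof -
  have "sqrt (2 * pi) \<le> sqrt ((25067/10000)^2)"
    using pi_approx(2) by (intro real_sqrt_le_mono) (simp add: power2_eq_square)
  then have "sqrt 2 * sqrt pi \<le> 25067/10000"
    by (simp add: real_sqrt_mult)
  then have "sqrt 2 * sqrt pi * exp (-1/2) \<le> (25067/10000) * (6066/10000)"
    using exp_minus_half_le by (intro mult_mono) auto
  then show ?thesis by simp
qed

lemma exp_minus_inverse_square_le:
  fixes r :: real assumes "r > 0" shows "exp (- 1 / (4 * r^2)) \<le> 9 * r^4"
proof -
  define y where "y = 1 / (4 * r^2)"
  have "y > 0" using assms by (simp add: y_def)
  have "27/10 * (y / 2) \<le> exp 1 * exp (y / 2 - 1)"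
    using exp_one_ge exp_ge_add_one_self[of "y / 2 - 1"] \<open>y > 0\<close> by (intro mult_mono) auto
  also have "\<dots> = exp (y / 2)"
    by (simp add: exp_add[symmetric])
  finally have "(27/10 * (y / 2))^2 \<le> exp (y / 2)^2"
    using \<open>y > 0\<close> by (intro power_mono) auto
  also have "exp (y / 2)^2 = exp y"
    by (simp add: power2_eq_square exp_add[symmetric])
  finally have "18225/10000 * y^2 \<le> exp y"
    by (simp add: power2_eq_square)
  then have "1 / exp y \<le> 1 / (18225/10000 * y^2)"
    using \<open>y > 0\<close> by (intro divide_left_mono) auto
  then have "exp (- y) \<le> 1 / (18225/10000 * y^2)"
    by (simp add: exp_minus inverse_eq_divide)
  also have "1 / (18225/10000 * y^2) = (16 / (18225/10000)) * r^4"
    using assms by (simp add: y_def field_simps eval_nat_numeral)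
  also have "\<dots> \<le> 9 * r^4"
    using assms by (intro mult_right_mono) auto
  finally show ?thesis
    by (simp add: y_def)
qed

lemma sqrt_2_ge: "1414/1000 \<le> sqrt (2::real)"
  by (rule real_le_rsqrt) (simp add: power2_eq_square)

lemma gauss_lattice_sum_le_small:
  assumes r: "0 < r" "r < 3/10"
  shows "gauss_lattice_sum r a \<le> 1 + 525/1000 * r"
proof -
  define p where "p = exp (- 1 / (4 * r^2))"
  define q where "q = exp (- 1 / r^2)"
  have "p \<le> 9 * r^4"
    using exp_minus_inverse_square_le[OF r(1)] by (simp add: p_def)
  also have "\<dots> = 9 * r^3 * r"
    by (simp add: power3_eq_cube power4_eq_xxxx)
  also have "\<dots> \<le> 9 * (3/10)^3 * r"
    by (intro mult_right_mono mult_left_mono power_mono) (use r in auto)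
  also have "\<dots> = 243/1000 * r"
    by (simp add: power_divide)
  finally have p: "p \<le> 243/1000 * r" .
  have "1 / (4 * r^2) \<le> 1 / r^2"
    using r by (intro frac_le) auto
  then have "q \<le> p"
    by (simp add: p_def q_def)
  then have q: "927/1000 \<le> 1 - q"
    using p r by simp
  have "gauss_lattice_sum r a \<le> 1 + 2 * p / (1 - q)"
    using gauss_lattice_sum_le[OF r(1)] by (simp add: p_def q_def)
  also have "2 * p / (1 - q) \<le> 2 * (243/1000 * r) / (927/1000)"
    using p q r by (intro frac_le) auto
  finally show ?thesis
    using r by simp
qed

lemma gauss_lattice_sum_bounds:
  assumes r: "r > 0"
  shows "gauss_lattice_sum r a \<le> r * sqrt pi + sqrt 2 * exp (-1/2) / (4 * r)"
    and "r * sqrt pi - sqrt 2 * exp (-1/2) / (4 * r) \<le> gauss_lattice_sum r a"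
  using gauss_lattice_sum_near_integral[OF r, of a] by (simp_all add: abs_le_iff)

lemma gauss_lattice_sum_product_le:
  assumes r: "r > 0"
  shows "gauss_lattice_sum r a * gauss_lattice_sum r b \<le> (r * sqrt pi)^2 + (1 + sqrt 2 * r)"
proof (cases "r \<ge> 3/10")
  case True
  define u where "u = r * sqrt pi"
  define e where "e = sqrt 2 * exp (-1/2) / (4 * r)"
  have "0 \<le> u + e"
    using gauss_lattice_sum_nonneg[of r a] gauss_lattice_sum_bounds(1)[OF r, of a]
    unfolding u_def e_def by linarith
  then have "gauss_lattice_sum r a * gauss_lattice_sum r b \<le> (u + e) * (u + e)"
    using gauss_lattice_sum_bounds(1)[OF r] gauss_lattice_sum_nonneg
    by (intro mult_mono) (auto simp: u_def e_def)
  moreover have "(u + e) * (u + e) = u^2 + 2 * u * e + e^2"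
    by (simp add: power2_eq_square algebra_simps)
  moreover have "2 * u * e = sqrt 2 * sqrt pi * exp (-1/2) / 2"
    using r by (simp add: u_def e_def field_simps)
  moreover have "e^2 \<le> 52/100"
  proof -
    have "exp (-1/2)^2 = exp (-1::real)"
      by (simp add: power2_eq_square exp_add[symmetric])
    then have "e^2 = exp (-1) / (8 * r^2)"
      by (simp add: e_def power_divide power_mult_distrib)
    moreover have "9/100 \<le> r^2"
      using True power_mono[of "3/10" r 2] by (simp add: power2_eq_square)
    ultimately show ?thesis
      using exp_minus_one_le frac_le[of "3679/10000" "exp (-1)" "8 * (9/100)" "8 * r^2"] by simp
  qed
  moreover have "1414/1000 * (3/10) \<le> sqrt 2 * r"
    using True sqrt_2_ge by (intro mult_mono) auto
  ultimately show ?thesis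
    using sqrt_2pi_exp_minus_half_le unfolding u_def[symmetric] by linarith
next
  case False
  let ?s = "1 + 525/1000 * r"
  have "gauss_lattice_sum r a * gauss_lattice_sum r b \<le> ?s * ?s"
    using gauss_lattice_sum_le_small[OF r] False gauss_lattice_sum_nonneg r by (intro mult_mono) auto
  also have "?s * ?s = 1 + 105/100 * r + (525/1000)^2 * (r * r)"
    by (simp add: algebra_simps power2_eq_square)
  also have "\<dots> \<le> 1 + 1414/1000 * r"
    using mult_right_mono[of r "3/10" r] r False by (simp add: power2_eq_square)
  also have "\<dots> \<le> 1 + sqrt 2 * r"
    using mult_right_mono[OF sqrt_2_ge, of r] r by simp
  finally show ?thesis
    using zero_le_power2[of "r * sqrt pi"] by linarith
qed

lemma gauss_lattice_sum_product_ge: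
  assumes r: "r > 0"
  shows "(r * sqrt pi)^2 - (1 + sqrt 2 * r) \<le> gauss_lattice_sum r a * gauss_lattice_sum r b"
proof (cases "r \<le> 8/10")
  case True
  have "(r * sqrt pi)^2 = r * (pi * r)"
    by (simp add: power_mult_distrib power2_eq_square)
  also have "\<dots> \<le> r * (31416/10000 * (8/10))"
    by (intro mult_left_mono mult_mono) (use pi_approx(2) True r in auto)
  also have "\<dots> \<le> 1 + sqrt 2 * r"
    using True r sqrt_2_ge mult_right_mono[of "1414/1000" "sqrt 2" r] by linarith
  finally show ?thesis
    using mult_nonneg_nonneg[OF gauss_lattice_sum_nonneg gauss_lattice_sum_nonneg, of r a r b] by linarith
next
  case False
  define u where "u = r * sqrt pi"
  define e where "e = sqrt 2 * exp (-1/2) / (4 * r)"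
  have "sqrt 2 \<le> 3/2"
    by (rule real_le_lsqrt) (auto simp: power2_eq_square)
  then have "sqrt 2 * exp (-1/2) \<le> 3/2 * (6066/10000)"
    by (intro mult_mono) (use exp_minus_half_le in auto)
  then have "e \<le> 3/2 * (6066/10000) / (4 * (8/10))"
    using False frac_le[of "3/2 * (6066/10000)" "sqrt 2 * exp (-1/2)" "4 * (8/10)" "4 * r"]
    by (simp add: e_def)
  moreover have "177/100 \<le> sqrt pi"
    by (rule real_le_rsqrt) (use pi_approx(1) in \<open>simp add: power2_eq_square\<close>)
  then have "8/10 * (177/100) \<le> u"
    unfolding u_def by (intro mult_mono) (use False in auto)
  ultimately have "0 \<le> u - e"
    by simp
  then have "(u - e) * (u - e) \<le> gauss_lattice_sum r a * gauss_lattice_sum r b"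
    by (intro mult_mono) (use gauss_lattice_sum_bounds(2)[OF r] gauss_lattice_sum_nonneg in \<open>auto simp: u_def e_def\<close>)
  moreover have "(u - e) * (u - e) = u^2 - 2 * u * e + e^2"
    by (simp add: power2_eq_square algebra_simps)
  moreover have "2 * u * e = sqrt 2 * sqrt pi * exp (-1/2) / 2"
    using r by (simp add: u_def e_def field_simps)
  moreover have "0 \<le> sqrt 2 * r"
    using r by simp
  ultimately show ?thesis
    using sqrt_2pi_exp_minus_half_le zero_le_power2[of e] unfolding u_def[symmetric] by linarith
qed

lemma gauss_lattice_sum_product_estimate:
  assumes "r > 0"
  shows "\<bar>gauss_lattice_sum r a * gauss_lattice_sum r b - (r * sqrt pi)^2\<bar> \<le> 1 + sqrt 2 * r"
  using gauss_lattice_sum_product_le[OF assms, of a b] gauss_lattice_sum_product_ge[OF assms, of a b]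
  unfolding abs_le_iff by (intro conjI; linarith)

section \<open>The two kernels\<close>

lemma
  fixes a :: "'a \<Rightarrow> real" and b :: "'b \<Rightarrow> real"
  assumes M1: "sigma_finite_measure M1" and M2: "sigma_finite_measure M2"
    and a: "integrable M1 a" and b: "integrable M2 b"
  shows integrable_pair_mult: "integrable (M1 \<Otimes>\<^sub>M M2) (\<lambda>p. a (fst p) * b (snd p))"
    and integral_pair_mult:
      "(\<integral>p. a (fst p) * b (snd p) \<partial>(M1 \<Otimes>\<^sub>M M2)) = (\<integral>u. a u \<partial>M1) * (\<integral>v. b v \<partial>M2)"
proof -
  interpret pair_sigma_finite M1 M2
    using M1 M2 by (simp add: pair_sigma_finite_def)
  have [measurable]: "a \<in> borel_measurable M1" "b \<in> borel_measurable M2"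
    using a b by (simp_all add: borel_measurable_integrable)
  show int: "integrable (M1 \<Otimes>\<^sub>M M2) (\<lambda>p. a (fst p) * b (snd p))"
  proof (rule Fubini_integrable)
    have "(\<lambda>x. \<integral>y. norm (a (fst (x, y)) * b (snd (x, y))) \<partial>M2) = (\<lambda>x. \<bar>a x\<bar> * (\<integral>y. \<bar>b y\<bar> \<partial>M2))"
      by (simp add: abs_mult)
    then show "integrable M1 (\<lambda>x. \<integral>y. norm (a (fst (x, y)) * b (snd (x, y))) \<partial>M2)"
      using a by simp
  qed (use b in simp_all)
  have "(\<integral>p. a (fst p) * b (snd p) \<partial>(M1 \<Otimes>\<^sub>M M2)) = (\<integral>x. (\<integral>y. a x * b y \<partial>M2) \<partial>M1)"
    using integral_fst'[OF int] by simp
  also have "\<dots> = (\<integral>u. a u \<partial>M1) * (\<integral>v. b v \<partial>M2)"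
    by simp
  finally show "(\<integral>p. a (fst p) * b (snd p) \<partial>(M1 \<Otimes>\<^sub>M M2)) = (\<integral>u. a u \<partial>M1) * (\<integral>v. b v \<partial>M2)" .
qed

definition gauss_overlap :: "real \<Rightarrow> real \<Rightarrow> real \<Rightarrow> real" where
  "gauss_overlap \<sigma> a b = exp (- ((a - b)^2) / (4 * \<sigma>^2)) / (2 * pi * \<sigma>^2)"

lemma gauss_overlap_pos: "\<sigma> > 0 \<Longrightarrow> gauss_overlap \<sigma> a b > 0"
  by (simp add: gauss_overlap_def)

lemma gauss_overlap_le: "\<sigma> > 0 \<Longrightarrow> gauss_overlap \<sigma> a b \<le> 1 / (2 * pi * \<sigma>^2)"
  by (simp add: gauss_overlap_def divide_right_mono)

lemma gauss_mult_gauss: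
  assumes "\<sigma> > 0"
  shows "gauss (\<sigma>^2) (s - a) * gauss (\<sigma>^2) (s - b) = gauss_overlap \<sigma> a b * gauss_bump \<sigma> (s - (a + b) / 2)"
proof -
  define P where "P = (2 * pi * \<sigma>^2) powr (-1/2)"
  define A where "A = - ((s - a)^2) / (2 * \<sigma>^2)"
  define B where "B = - ((s - b)^2) / (2 * \<sigma>^2)"
  define C where "C = - ((a - b)^2) / (4 * \<sigma>^2)"
  define D where "D = - ((s - (a + b) / 2)^2) / \<sigma>^2"
  have "P * P = 1 / (2 * pi * \<sigma>^2)"
    using assms by (simp add: P_def powr_add[symmetric] powr_minus_divide)
  moreover have "A + B = C + D"
    using assms by (simp add: A_def B_def C_def D_def field_simps power2_eq_square)
  moreover have "gauss (\<sigma>^2) (s - a) * gauss (\<sigma>^2) (s - b) = (P * P) * exp (A + B)"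
    unfolding exp_add by (simp add: gauss_def P_def A_def B_def)
  moreover have "gauss_overlap \<sigma> a b * gauss_bump \<sigma> (s - (a + b) / 2) = exp (C + D) / (2 * pi * \<sigma>^2)"
    unfolding exp_add by (simp add: gauss_overlap_def gauss_bump_def C_def D_def)
  ultimately show ?thesis
    by simp
qed

lemma
  assumes "\<sigma> > 0"
  shows integrable_gauss_mult_gauss: "integrable lborel (\<lambda>s. gauss (\<sigma>^2) (s - a) * gauss (\<sigma>^2) (s - b))"
    and integral_gauss_mult_gauss:
      "(\<integral>s. gauss (\<sigma>^2) (s - a) * gauss (\<sigma>^2) (s - b) \<partial>lborel) = gauss_overlap \<sigma> a b * (\<sigma> * sqrt pi)"
  using integrable_gauss_bump_shift[OF assms, of "(a + b) / 2"] integral_gauss_bump_shift[OF assms, of "(a + b) / 2"]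
  by (simp_all add: gauss_mult_gauss[OF assms])

lemma gauss_bump_scale:
  assumes "\<delta> > 0" shows "gauss_bump \<sigma> (\<delta> * x) = gauss_bump (\<sigma> / \<delta>) x"
  using assms by (simp add: gauss_bump_def power_mult_distrib power_divide)

lemma gauss_grid_sum:
  fixes x0 a b :: real
  assumes \<sigma>: "\<sigma> > 0" and \<delta>: "\<delta> > 0"
  defines "g \<equiv> \<lambda>k::int.
    gauss (\<sigma>^2) (x0 + of_int k * \<delta> - a) * gauss (\<sigma>^2) (x0 + of_int k * \<delta> - b)"
  shows "Infinite_Set_Sum.abs_summable_on g UNIV"
    and "infsetsum g UNIV = gauss_overlap \<sigma> a b * gauss_lattice_sum (\<sigma> / \<delta>) (((a + b) / 2 - x0) / \<delta>)"
proof -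
  let ?h = "\<lambda>k::int. gauss_bump (\<sigma> / \<delta>) (of_int k - ((a + b) / 2 - x0) / \<delta>)"
  have "x0 + of_int k * \<delta> - (a + b) / 2 = \<delta> * (of_int k - ((a + b) / 2 - x0) / \<delta>)" for k :: int
    using \<delta> by (simp add: field_simps)
  then have g: "g = (\<lambda>k. gauss_overlap \<sigma> a b * ?h k)"
    by (simp add: g_def gauss_mult_gauss[OF \<sigma>] gauss_bump_scale[OF \<delta>])
  have "?h summable_on UNIV"
    using summable_gauss_lattice \<sigma> \<delta> by simp
  then have "Infinite_Sum.abs_summable_on ?h UNIV"
    by (simp add: abs_of_nonneg less_imp_le[OF gauss_bump_pos])
  then have h: "Infinite_Set_Sum.abs_summable_on ?h UNIV"
    using abs_summable_equivalent by blast
  then show "Infinite_Set_Sum.abs_summable_on g UNIV"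
    unfolding g by (rule abs_summable_on_cmult_right)
  show "infsetsum g UNIV = gauss_overlap \<sigma> a b * gauss_lattice_sum (\<sigma> / \<delta>) (((a + b) / 2 - x0) / \<delta>)"
    unfolding g infsetsum_cmult_right[OF h] infsetsum_infsum[OF h] gauss_lattice_sum_def ..
qed

lemma gauss_eq_normal_density:
  assumes "\<sigma> > 0" shows "gauss (\<sigma>^2) = normal_density 0 \<sigma>"
  using assms by (simp add: fun_eq_iff gauss_def normal_density_def powr_minus_divide powr_half_sqrt)

lemma
  assumes "\<sigma> > 0"
  shows Phi2_nonneg: "Phi2 \<sigma> x \<ge> 0"
    and Phi2_le: "Phi2 \<sigma> x \<le> 1 / (2 * pi * \<sigma>^2)"
    and Phi2_measurable: "Phi2 \<sigma> \<in> borel_measurable borel"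
proof -
  have "normal_density 0 \<sigma> t \<le> 1 / sqrt (2 * pi * \<sigma>^2)" for t
    unfolding normal_density_def by (rule mult_left_le) auto
  then have "Phi2 \<sigma> x \<le> 1 / sqrt (2 * pi * \<sigma>^2) * (1 / sqrt (2 * pi * \<sigma>^2))"
    unfolding Phi2_def gauss_eq_normal_density[OF assms] by (intro mult_mono) auto
  then show "Phi2 \<sigma> x \<le> 1 / (2 * pi * \<sigma>^2)"
    using assms by (simp add: real_sqrt_mult[symmetric])
  show "Phi2 \<sigma> x \<ge> 0"
    by (simp add: Phi2_def gauss_eq_normal_density[OF assms])
  have "continuous_on UNIV (Phi2 \<sigma>)"
    unfolding Phi2_def[abs_def] gauss_eq_normal_density[OF assms] normal_density_def[abs_def] divide_inverse
    by (intro continuous_intros)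
  then show "Phi2 \<sigma> \<in> borel_measurable borel"
    by (rule borel_measurable_continuous_onI)
qed

lemma
  assumes \<sigma>: "\<sigma> > 0"
  shows integrable_Phi2_mult_Phi2: "integrable lborel (\<lambda>x::real \<times> real. Phi2 \<sigma> (x - y) * Phi2 \<sigma> (x - z))"
    and integral_Phi2_mult_Phi2: "(\<integral>x. Phi2 \<sigma> (x - y) * Phi2 \<sigma> (x - z) \<partial>lborel)
          = (gauss_overlap \<sigma> (fst y) (fst z) * (\<sigma> * sqrt pi)) * (gauss_overlap \<sigma> (snd y) (snd z) * (\<sigma> * sqrt pi))"
proof -
  define A where "A s = gauss (\<sigma>^2) (s - fst y) * gauss (\<sigma>^2) (s - fst z)" for s
  define B where "B t = gauss (\<sigma>^2) (t - snd y) * gauss (\<sigma>^2) (t - snd z)" for t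
  have eq: "(\<lambda>x::real \<times> real. Phi2 \<sigma> (x - y) * Phi2 \<sigma> (x - z)) = (\<lambda>p. A (fst p) * B (snd p))"
    by (simp add: fun_eq_iff Phi2_def A_def B_def)
  have A: "integrable lborel A"
    unfolding A_def[abs_def] by (rule integrable_gauss_mult_gauss[OF \<sigma>])
  have B: "integrable lborel B"
    unfolding B_def[abs_def] by (rule integrable_gauss_mult_gauss[OF \<sigma>])
  note AB = integrable_pair_mult[OF sigma_finite_lborel sigma_finite_lborel A B]
    integral_pair_mult[OF sigma_finite_lborel sigma_finite_lborel A B]
  show "integrable lborel (\<lambda>x::real \<times> real. Phi2 \<sigma> (x - y) * Phi2 \<sigma> (x - z))"
    unfolding eq lborel_prod[symmetric] by (rule AB(1))
  show "(\<integral>x. Phi2 \<sigma> (x - y) * Phi2 \<sigma> (x - z) \<partial>lborel)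
      = (gauss_overlap \<sigma> (fst y) (fst z) * (\<sigma> * sqrt pi)) * (gauss_overlap \<sigma> (snd y) (snd z) * (\<sigma> * sqrt pi))"
    unfolding eq lborel_prod[symmetric] AB(2) unfolding A_def[abs_def] B_def[abs_def]
    by (simp add: integral_gauss_mult_gauss[OF \<sigma>])
qed

lemma integral_Phi2_mult_Phi2_le:
  assumes \<sigma>: "\<sigma> > 0"
  shows "(\<integral>x. Phi2 \<sigma> (x - y) * Phi2 \<sigma> (x - z) \<partial>lborel) \<le> (\<sigma> * sqrt pi / (2 * pi * \<sigma>^2))^2"
proof -
  have "gauss_overlap \<sigma> a b * (\<sigma> * sqrt pi) \<le> \<sigma> * sqrt pi / (2 * pi * \<sigma>^2)" for a b
    using mult_right_mono[OF gauss_overlap_le[OF \<sigma>], of "\<sigma> * sqrt pi" a b] \<sigma> by simp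
  then show ?thesis
    unfolding integral_Phi2_mult_Phi2[OF \<sigma>] power2_eq_square
    using gauss_overlap_pos[OF \<sigma>] \<sigma> by (intro mult_mono) (auto intro: less_imp_le)
qed

lemma
  assumes \<sigma>: "\<sigma> > 0" and n: "n \<ge> 2"
  defines "\<delta> \<equiv> 2 / (real n - 1)"
  shows integrable_Phi2_grid:
      "integrable (count_space UNIV) (\<lambda>kl. Phi2 \<sigma> (gridpt n kl - y) * Phi2 \<sigma> (gridpt n kl - z))"
    and integral_Phi2_grid:
      "(\<integral>kl. Phi2 \<sigma> (gridpt n kl - y) * Phi2 \<sigma> (gridpt n kl - z) \<partial>count_space UNIV)
        = (gauss_overlap \<sigma> (fst y) (fst z) * gauss_lattice_sum (\<sigma> / \<delta>) (((fst y + fst z) / 2 - 1) / \<delta>))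
        * (gauss_overlap \<sigma> (snd y) (snd z) * gauss_lattice_sum (\<sigma> / \<delta>) (((snd y + snd z) / 2 - 1) / \<delta>))"
proof -
  have \<delta>: "\<delta> > 0"
    using n by (simp add: \<delta>_def)
  define F where "F a b k = gauss (\<sigma>^2) (1 + of_int k * \<delta> - a) * gauss (\<sigma>^2) (1 + of_int k * \<delta> - b)"
    for a b :: real and k :: int
  have "gridpt n kl = (1 + of_int (fst kl) * \<delta>, 1 + of_int (snd kl) * \<delta>)" for kl
    by (simp add: gridpt_def \<delta>_def)
  then have eq: "(\<lambda>kl. Phi2 \<sigma> (gridpt n kl - y) * Phi2 \<sigma> (gridpt n kl - z))
      = (\<lambda>(k, l). F (fst y) (fst z) k * F (snd y) (snd z) l)"
    by (auto simp: fun_eq_iff Phi2_def F_def)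
  note F = gauss_grid_sum[OF \<sigma> \<delta>, of 1, folded F_def]
  have UNIV: "(UNIV :: (int \<times> int) set) = UNIV \<times> UNIV"
    by simp
  show "integrable (count_space UNIV) (\<lambda>kl. Phi2 \<sigma> (gridpt n kl - y) * Phi2 \<sigma> (gridpt n kl - z))"
    using abs_summable_on_product[OF _ _ F(1) F(1)]
    unfolding eq UNIV Infinite_Set_Sum.abs_summable_on_def by simp
  show "(\<integral>kl. Phi2 \<sigma> (gridpt n kl - y) * Phi2 \<sigma> (gridpt n kl - z) \<partial>count_space UNIV)
      = (gauss_overlap \<sigma> (fst y) (fst z) * gauss_lattice_sum (\<sigma> / \<delta>) (((fst y + fst z) / 2 - 1) / \<delta>))
      * (gauss_overlap \<sigma> (snd y) (snd z) * gauss_lattice_sum (\<sigma> / \<delta>) (((snd y + snd z) / 2 - 1) / \<delta>))"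
    using infsetsum_product[OF _ _ F(1) F(1)]
    unfolding eq UNIV infsetsum_def[symmetric] by (simp add: F(2))
qed

definition Phi2_kernel :: "real \<Rightarrow> (real \<times> real) \<times> (real \<times> real) \<Rightarrow> real" where
  "Phi2_kernel \<sigma> w = (\<integral>x. Phi2 \<sigma> (x - fst w) * Phi2 \<sigma> (x - snd w) \<partial>lborel)"

definition Phi2_grid_kernel :: "real \<Rightarrow> nat \<Rightarrow> (real \<times> real) \<times> (real \<times> real) \<Rightarrow> real" where
  "Phi2_grid_kernel \<sigma> n w =
    (\<integral>kl. Phi2 \<sigma> (gridpt n kl - fst w) * Phi2 \<sigma> (gridpt n kl - snd w) \<partial>count_space UNIV)"

lemma Phi2_kernel_discrepancy:
  assumes \<sigma>: "\<sigma> > 0" and n: "n \<ge> 2"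
  shows "\<bar>((real n - 1) / 2)^2 * Phi2_kernel \<sigma> (y, z) - Phi2_grid_kernel \<sigma> n (y, z)\<bar>
         \<le> 1 / (2 * pi * \<sigma>^2)^2 * (1 + (real n - 1) * \<sigma> / sqrt 2)"
proof -
  define \<delta> where "\<delta> = 2 / (real n - 1)"
  define r where "r = \<sigma> / \<delta>"
  have r: "r > 0" "r = \<sigma> * (real n - 1) / 2"
    using \<sigma> n by (auto simp: r_def \<delta>_def)
  define c1 where "c1 = gauss_overlap \<sigma> (fst y) (fst z)"
  define c2 where "c2 = gauss_overlap \<sigma> (snd y) (snd z)"
  define S1 where "S1 = gauss_lattice_sum r (((fst y + fst z) / 2 - 1) / \<delta>)"
  define S2 where "S2 = gauss_lattice_sum r (((snd y + snd z) / 2 - 1) / \<delta>)"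
  have c: "0 < c1" "c1 \<le> 1 / (2 * pi * \<sigma>^2)" "0 < c2" "c2 \<le> 1 / (2 * pi * \<sigma>^2)"
    using gauss_overlap_pos[OF \<sigma>] gauss_overlap_le[OF \<sigma>] by (auto simp: c1_def c2_def)
  have "((real n - 1) / 2)^2 * Phi2_kernel \<sigma> (y, z) - Phi2_grid_kernel \<sigma> n (y, z)
      = ((real n - 1) / 2)^2 * ((c1 * (\<sigma> * sqrt pi)) * (c2 * (\<sigma> * sqrt pi))) - (c1 * S1) * (c2 * S2)"
    unfolding Phi2_kernel_def Phi2_grid_kernel_def integral_Phi2_mult_Phi2[OF \<sigma>] integral_Phi2_grid[OF \<sigma> n]
    by (simp add: c1_def c2_def S1_def S2_def r_def \<delta>_def)
  also have "\<dots> = (c1 * c2) * ((r * sqrt pi)^2 - S1 * S2)"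
  proof -
    have "m * ((c1 * K) * (c2 * K)) - (c1 * S1) * (c2 * S2) = (c1 * c2) * (m * K^2 - S1 * S2)" for m K :: real
      by (simp add: power2_eq_square algebra_simps)
    moreover have "r * sqrt pi = (real n - 1) / 2 * (\<sigma> * sqrt pi)"
      unfolding r(2) by simp
    then have "(r * sqrt pi)^2 = ((real n - 1) / 2)^2 * (\<sigma> * sqrt pi)^2"
      by (simp only: power_mult_distrib)
    ultimately show ?thesis
      by simp
  qed
  also have "\<bar>\<dots>\<bar> = (c1 * c2) * \<bar>S1 * S2 - (r * sqrt pi)^2\<bar>"
    using c by (simp add: abs_mult abs_minus_commute)
  also have "\<dots> \<le> (1 / (2 * pi * \<sigma>^2) * (1 / (2 * pi * \<sigma>^2))) * (1 + sqrt 2 * r)"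
    using c r gauss_lattice_sum_product_estimate[OF r(1)]
    by (intro mult_mono) (auto simp: S1_def S2_def)
  also have "sqrt 2 * r = (real n - 1) * \<sigma> / sqrt 2"
    using r(2) by (simp add: field_simps)
  finally show ?thesis
    by (simp add: power2_eq_square)
qed

section \<open>Inner products of convolutions as kernel integrals\<close>

lemma integrable_conv2_integrand:
  fixes h f :: "'a::euclidean_space \<Rightarrow> real"
  assumes h: "h \<in> borel_measurable borel" "\<And>x. \<bar>h x\<bar> \<le> B" and f: "integrable lborel f"
  shows "integrable lborel (\<lambda>y. h (x - y) * f y)"
proof (rule Bochner_Integration.integrable_bound)
  show "integrable lborel (\<lambda>y. B * \<bar>f y\<bar>)"
    using f by simp
  have [measurable]: "f \<in> borel_measurable lborel" "h \<in> borel_measurable borel"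
    using f h by (simp_all add: borel_measurable_integrable)
  show "(\<lambda>y. h (x - y) * f y) \<in> borel_measurable lborel"
    by measurable
  show "AE y in lborel. norm (h (x - y) * f y) \<le> norm (B * \<bar>f y\<bar>)"
    using h(2) order_trans[OF abs_ge_zero h(2)]
    by (intro AE_I2) (simp add: abs_mult mult_right_mono)
qed

lemma integrable_pair_mult_bounded:
  fixes a :: "'a \<Rightarrow> real" and b :: "'b \<Rightarrow> real"
  assumes M1: "sigma_finite_measure M1" and M2: "sigma_finite_measure M2"
    and a: "integrable M1 a" and b: "integrable M2 b"
    and K: "K \<in> borel_measurable (M1 \<Otimes>\<^sub>M M2)" "\<And>w. \<bar>K w\<bar> \<le> C"
  shows "integrable (M1 \<Otimes>\<^sub>M M2) (\<lambda>w. a (fst w) * b (snd w) * K w)"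
proof (rule Bochner_Integration.integrable_bound)
  show "integrable (M1 \<Otimes>\<^sub>M M2) (\<lambda>w. C * (\<bar>a (fst w)\<bar> * \<bar>b (snd w)\<bar>))"
    using a b by (intro integrable_mult_right integrable_pair_mult M1 M2) auto
  have [measurable]: "a \<in> borel_measurable M1" "b \<in> borel_measurable M2"
    using a b by (simp_all add: borel_measurable_integrable)
  show "(\<lambda>w. a (fst w) * b (snd w) * K w) \<in> borel_measurable (M1 \<Otimes>\<^sub>M M2)"
    using K(1) by measurable
  show "AE w in M1 \<Otimes>\<^sub>M M2. norm (a (fst w) * b (snd w) * K w) \<le> norm (C * (\<bar>a (fst w)\<bar> * \<bar>b (snd w)\<bar>))"
  proof (intro AE_I2)
    fix w
    have "\<bar>a (fst w)\<bar> * \<bar>b (snd w)\<bar> * \<bar>K w\<bar> \<le> \<bar>a (fst w)\<bar> * \<bar>b (snd w)\<bar> * C"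
      using K(2) by (intro mult_left_mono) auto
    moreover have "0 \<le> C"
      using K(2) order_trans[OF abs_ge_zero] by blast
    ultimately show "norm (a (fst w) * b (snd w) * K w) \<le> norm (C * (\<bar>a (fst w)\<bar> * \<bar>b (snd w)\<bar>))"
      by (simp add: abs_mult ac_simps)
  qed
qed

lemma conv2_product_fubini:
  fixes h f g :: "real \<times> real \<Rightarrow> real" and \<psi> :: "'a \<Rightarrow> real \<times> real"
  assumes h: "h \<in> borel_measurable borel" "\<And>x. 0 \<le> h x" "\<And>x. h x \<le> B"
    and M: "sigma_finite_measure M" and \<psi>: "\<psi> \<in> borel_measurable M"
    and f: "integrable lborel f" and g: "integrable lborel g"
    and K_integrable: "\<And>y z. integrable M (\<lambda>x. h (\<psi> x - y) * h (\<psi> x - z))"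
    and K_bounded: "\<And>y z. (\<integral>x. h (\<psi> x - y) * h (\<psi> x - z) \<partial>M) \<le> C"
  defines "K \<equiv> \<lambda>w. \<integral>x. h (\<psi> x - fst w) * h (\<psi> x - snd w) \<partial>M"
  shows "integrable M (\<lambda>x. conv2 h f (\<psi> x) * conv2 h g (\<psi> x))"
    and "integrable (lborel \<Otimes>\<^sub>M lborel) (\<lambda>w. f (fst w) * g (snd w) * K w)"
    and "(\<integral>x. conv2 h f (\<psi> x) * conv2 h g (\<psi> x) \<partial>M)
         = (\<integral>w. f (fst w) * g (snd w) * K w \<partial>(lborel \<Otimes>\<^sub>M lborel))"
proof -
  let ?N = "lborel \<Otimes>\<^sub>M lborel :: ((real \<times> real) \<times> (real \<times> real)) measure"
  interpret P: pair_sigma_finite ?N M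
    using M unfolding lborel_prod by (simp add: pair_sigma_finite_def sigma_finite_lborel)
  have [measurable]: "f \<in> borel_measurable lborel" "g \<in> borel_measurable lborel"
    "h \<in> borel_measurable borel" "\<psi> \<in> borel_measurable M"
    using f g h \<psi> by (simp_all add: borel_measurable_integrable)
  define G where "G w x = f (fst w) * g (snd w) * (h (\<psi> x - fst w) * h (\<psi> x - snd w))" for w x
  have G_measurable: "(\<lambda>(w, x). G w x) \<in> borel_measurable (?N \<Otimes>\<^sub>M M)"
    unfolding G_def by measurable
  have K_nonneg: "0 \<le> K w" for w
    unfolding K_def using h(2) by (intro integral_nonneg_AE AE_I2 mult_nonneg_nonneg)
  have "(\<lambda>w. K w) \<in> borel_measurable ?N"
  proof -
    have [measurable]: "(\<lambda>(w, x). h (\<psi> x - fst w) * h (\<psi> x - snd w)) \<in> borel_measurable (?N \<Otimes>\<^sub>M M)"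
      by measurable
    show ?thesis
      unfolding K_def by (rule P.M2.borel_measurable_lebesgue_integral) measurable
  qed
  then have [measurable]: "K \<in> borel_measurable ?N" by simp
  have "\<bar>K w\<bar> \<le> C" for w
    using K_nonneg[of w] K_bounded[of "fst w" "snd w"] by (simp add: K_def)
  then have fgK: "integrable ?N (\<lambda>w. \<bar>f (fst w)\<bar> * \<bar>g (snd w)\<bar> * K w)"
    using f g by (intro integrable_pair_mult_bounded sigma_finite_lborel) auto
  have G_integrable: "integrable (?N \<Otimes>\<^sub>M M) (\<lambda>(w, x). G w x)"
  proof (rule P.Fubini_integrable[OF G_measurable], goal_cases)
    case 1
    have "(\<integral>x. norm (G w x) \<partial>M) = \<bar>f (fst w)\<bar> * \<bar>g (snd w)\<bar> * K w" for w
      using h(2) by (simp add: G_def K_def abs_mult)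
    then show ?case
      using fgK by simp
  next
    case 2
    then show ?case
      using K_integrable by (simp add: G_def)
  qed
  have inner_M: "(\<integral>x. G w x \<partial>M) = f (fst w) * g (snd w) * K w" for w
    by (simp add: G_def K_def)
  have inner_N: "(\<integral>w. G w x \<partial>?N) = conv2 h f (\<psi> x) * conv2 h g (\<psi> x)" for x
  proof -
    have "\<bar>h y\<bar> \<le> B" for y
      using h(2,3) by simp
    then have "integrable lborel (\<lambda>y. h (\<psi> x - y) * f y)" "integrable lborel (\<lambda>z. h (\<psi> x - z) * g z)"
      using f g h(1) by (blast intro: integrable_conv2_integrand)+
    then show ?thesis
      unfolding conv2_def G_def
      by (subst integral_pair_mult[OF sigma_finite_lborel sigma_finite_lborel, symmetric]) (simp_all add: ac_simps)
  qed
  show "integrable M (\<lambda>x. conv2 h f (\<psi> x) * conv2 h g (\<psi> x))"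
    using P.integrable_snd[OF G_integrable] by (simp add: inner_N)
  show "integrable (lborel \<Otimes>\<^sub>M lborel) (\<lambda>w. f (fst w) * g (snd w) * K w)"
    using P.integrable_fst[OF G_integrable] by (simp add: inner_M)
  show "(\<integral>x. conv2 h f (\<psi> x) * conv2 h g (\<psi> x) \<partial>M)
      = (\<integral>w. f (fst w) * g (snd w) * K w \<partial>(lborel \<Otimes>\<^sub>M lborel))"
    using P.integral_fst[OF G_integrable] P.integral_snd[OF G_integrable]
    by (simp add: inner_M inner_N)
qed

lemma abs_integral_pair_kernel_le:
  fixes f :: "'a \<Rightarrow> real" and g :: "'b \<Rightarrow> real"
  assumes M1: "sigma_finite_measure M1" and M2: "sigma_finite_measure M2"
    and f: "integrable M1 f" and g: "integrable M2 g"
    and D: "integrable (M1 \<Otimes>\<^sub>M M2) (\<lambda>w. f (fst w) * g (snd w) * D w)" "\<And>w. \<bar>D w\<bar> \<le> B"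
  shows "\<bar>\<integral>w. f (fst w) * g (snd w) * D w \<partial>(M1 \<Otimes>\<^sub>M M2)\<bar>
           \<le> B * ((\<integral>x. \<bar>f x\<bar> \<partial>M1) * (\<integral>y. \<bar>g y\<bar> \<partial>M2))"
proof -
  have fg: "integrable (M1 \<Otimes>\<^sub>M M2) (\<lambda>w. \<bar>f (fst w)\<bar> * \<bar>g (snd w)\<bar>)"
    using f g by (intro integrable_pair_mult M1 M2) auto
  have "\<bar>\<integral>w. f (fst w) * g (snd w) * D w \<partial>(M1 \<Otimes>\<^sub>M M2)\<bar>
      \<le> (\<integral>w. \<bar>f (fst w) * g (snd w) * D w\<bar> \<partial>(M1 \<Otimes>\<^sub>M M2))"
    by (rule integral_abs_bound)
  also have "\<dots> \<le> (\<integral>w. B * (\<bar>f (fst w)\<bar> * \<bar>g (snd w)\<bar>) \<partial>(M1 \<Otimes>\<^sub>M M2))"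
  proof (rule integral_mono)
    show "\<bar>f (fst w) * g (snd w) * D w\<bar> \<le> B * (\<bar>f (fst w)\<bar> * \<bar>g (snd w)\<bar>)" for w
      using mult_left_mono[OF D(2)[of w], of "\<bar>f (fst w)\<bar> * \<bar>g (snd w)\<bar>"] by (simp add: abs_mult ac_simps)
  qed (use D(1) fg in simp_all)
  also have "\<dots> = B * ((\<integral>x. \<bar>f x\<bar> \<partial>M1) * (\<integral>y. \<bar>g y\<bar> \<partial>M2))"
    using integral_pair_mult[OF M1 M2, of "\<lambda>x. \<bar>f x\<bar>" "\<lambda>y. \<bar>g y\<bar>"] f g by simp
  finally show ?thesis .
qed

lemma L2inner_conv2_Phi2:
  assumes \<sigma>: "\<sigma> > 0" and f: "integrable lborel f" and g: "integrable lborel g"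
  shows "integrable (lborel \<Otimes>\<^sub>M lborel) (\<lambda>w. f (fst w) * g (snd w) * Phi2_kernel \<sigma> w)"
    and "L2inner (conv2 (Phi2 \<sigma>) f) (conv2 (Phi2 \<sigma>) g)
           = (\<integral>w. f (fst w) * g (snd w) * Phi2_kernel \<sigma> w \<partial>(lborel \<Otimes>\<^sub>M lborel))"
  using conv2_product_fubini(2,3)[OF Phi2_measurable[OF \<sigma>] Phi2_nonneg[OF \<sigma>] Phi2_le[OF \<sigma>]
      sigma_finite_lborel measurable_ident_sets[OF sets_lborel] f g
      integrable_Phi2_mult_Phi2[OF \<sigma>] integral_Phi2_mult_Phi2_le[OF \<sigma>]]
  by (simp_all add: L2inner_def Phi2_kernel_def[abs_def])

lemma grid_sum_conv2_Phi2:
  assumes \<sigma>: "\<sigma> > 0" and n: "n \<ge> 2" and f: "integrable lborel f" and g: "integrable lborel g"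
  defines "F \<equiv> \<lambda>kl. conv2 (Phi2 \<sigma>) f (gridpt n kl) * conv2 (Phi2 \<sigma>) g (gridpt n kl)"
  shows "F summable_on UNIV"
    and "integrable (lborel \<Otimes>\<^sub>M lborel) (\<lambda>w. f (fst w) * g (snd w) * Phi2_grid_kernel \<sigma> n w)"
    and "infsum F UNIV = (\<integral>w. f (fst w) * g (snd w) * Phi2_grid_kernel \<sigma> n w \<partial>(lborel \<Otimes>\<^sub>M lborel))"
proof -
  define m where "m = ((real n - 1) / 2)^2"
  \<comment> \<open>the discrepancy estimate transfers the bound on the continuous kernel to the grid kernel\<close>
  have kernel_bounded: "Phi2_grid_kernel \<sigma> n (y, z)
      \<le> m * (\<sigma> * sqrt pi / (2 * pi * \<sigma>^2))^2 + 1 / (2 * pi * \<sigma>^2)^2 * (1 + (real n - 1) * \<sigma> / sqrt 2)"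
    for y z
  proof -
    have "m * Phi2_kernel \<sigma> (y, z) \<le> m * (\<sigma> * sqrt pi / (2 * pi * \<sigma>^2))^2"
      unfolding Phi2_kernel_def m_def by (intro mult_left_mono integral_Phi2_mult_Phi2_le[OF \<sigma>]) auto
    then show ?thesis
      using Phi2_kernel_discrepancy[OF \<sigma> n, of y z] unfolding m_def abs_le_iff by linarith
  qed
  have "sigma_finite_measure (count_space (UNIV :: (int \<times> int) set))"
    by (rule sigma_finite_measure_count_space_countable) simp
  note fubini = conv2_product_fubini[OF Phi2_measurable[OF \<sigma>] Phi2_nonneg[OF \<sigma>] Phi2_le[OF \<sigma>]
      this borel_measurable_count_space f g integrable_Phi2_grid[OF \<sigma> n]
      kernel_bounded[unfolded Phi2_grid_kernel_def, simplified], folded F_def]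
  have abs_summable: "Infinite_Set_Sum.abs_summable_on F UNIV"
    unfolding abs_summable_on_def by (rule fubini(1))
  then show "F summable_on UNIV"
    using abs_summable_equivalent by (blast intro: abs_summable_summable)
  show "integrable (lborel \<Otimes>\<^sub>M lborel) (\<lambda>w. f (fst w) * g (snd w) * Phi2_grid_kernel \<sigma> n w)"
    using fubini(2) by (simp add: Phi2_grid_kernel_def[abs_def])
  have "infsum F UNIV = infsetsum F UNIV"
    by (rule infsetsum_infsum[OF abs_summable, symmetric])
  also have "\<dots> = (\<integral>w. f (fst w) * g (snd w) * Phi2_grid_kernel \<sigma> n w \<partial>(lborel \<Otimes>\<^sub>M lborel))"
    unfolding infsetsum_def fubini(3) by (simp add: Phi2_grid_kernel_def[abs_def])
  finally show "infsum F UNIV = (\<integral>w. f (fst w) * g (snd w) * Phi2_grid_kernel \<sigma> n w \<partial>(lborel \<Otimes>\<^sub>M lborel))" .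
qed

theorem mainTheorem18:
  fixes \<sigma> :: real and n :: nat and f g :: "real \<times> real \<Rightarrow> real"
  assumes "\<sigma> > 0" and "n \<ge> 2"
    and "integrable lborel f" and "L2 f"
    and "integrable lborel g" and "L2 g"
  shows "(\<lambda>kl. conv2 (Phi2 \<sigma>) f (gridpt n kl) * conv2 (Phi2 \<sigma>) g (gridpt n kl)) summable_on (UNIV :: (int \<times> int) set)
    \<and> \<bar>((real n - 1) / 2)^2 * L2inner (conv2 (Phi2 \<sigma>) f) (conv2 (Phi2 \<sigma>) g)
        - infsum (\<lambda>kl. conv2 (Phi2 \<sigma>) f (gridpt n kl) * conv2 (Phi2 \<sigma>) g (gridpt n kl)) (UNIV :: (int \<times> int) set)\<bar>
      \<le> L1norm f * L1norm g / (2 * pi * \<sigma>^2)^2 * (1 + (real n - 1) * \<sigma> / sqrt 2)"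
proof -
  note \<sigma> = \<open>\<sigma> > 0\<close> and n = \<open>n \<ge> 2\<close> and f = \<open>integrable lborel f\<close> and g = \<open>integrable lborel g\<close>
  define m where "m = ((real n - 1) / 2)^2"
  define D where "D w = m * Phi2_kernel \<sigma> w - Phi2_grid_kernel \<sigma> n w" for w
  note L = L2inner_conv2_Phi2[OF \<sigma> f g] and G = grid_sum_conv2_Phi2[OF \<sigma> n f g]
  have D_integral: "(\<lambda>w. f (fst w) * g (snd w) * D w)
      = (\<lambda>w. m * (f (fst w) * g (snd w) * Phi2_kernel \<sigma> w) - f (fst w) * g (snd w) * Phi2_grid_kernel \<sigma> n w)"
    by (simp add: fun_eq_iff D_def algebra_simps)
  have "m * L2inner (conv2 (Phi2 \<sigma>) f) (conv2 (Phi2 \<sigma>) g)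
      - (\<Sum>\<^sub>\<infinity>kl. conv2 (Phi2 \<sigma>) f (gridpt n kl) * conv2 (Phi2 \<sigma>) g (gridpt n kl))
      = (\<integral>w. f (fst w) * g (snd w) * D w \<partial>(lborel \<Otimes>\<^sub>M lborel))"
    unfolding D_integral L(2) G(3) using L(1) G(2) by simp
  also have "\<bar>\<dots>\<bar> \<le> 1 / (2 * pi * \<sigma>^2)^2 * (1 + (real n - 1) * \<sigma> / sqrt 2) * (L1norm f * L1norm g)"
    unfolding L1norm_def
  proof (rule abs_integral_pair_kernel_le[OF sigma_finite_lborel sigma_finite_lborel f g])
    show "integrable (lborel \<Otimes>\<^sub>M lborel) (\<lambda>w. f (fst w) * g (snd w) * D w)"
      unfolding D_integral using L(1) G(2) by simp
    show "\<bar>D w\<bar> \<le> 1 / (2 * pi * \<sigma>^2)^2 * (1 + (real n - 1) * \<sigma> / sqrt 2)" for w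
      using Phi2_kernel_discrepancy[OF \<sigma> n, of "fst w" "snd w"] by (simp add: D_def m_def)
  qed
  finally show ?thesis
    using G(1) unfolding m_def by (simp add: ac_simps)
qed

end
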